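(* Let $A:\mathbb{R}^d\rightrightarrows\mathbb{R}^d$ be maximal monotone with $A^{-1}(0)\neq\emptyset$, let $p\geq1$ be an integer, $\sigma\in(0,1)$, $\theta>0$, $x_0\in\mathbb{R}^d\setminus A^{-1}(0)$, and suppose $\lambda_k>0$, $y_k,v_k,x_k\in\mathbb{R}^d$, $\epsilon_k\geq0$ satisfy for every $k\geq0$: $v_{k+1}\in A^{\epsilon_{k+1}}(y_{k+1})$, $\|\lambda_{k+1}v_{k+1}+y_{k+1}-x_k\|^2+2\lambda_{k+1}\epsilon_{k+1}\leq\sigma^2\|y_{k+1}-x_k\|^2$, $\lambda_{k+1}\|y_{k+1}-x_k\|^{p-1}\geq\theta$, and $x_{k+1}=x_k-\lambda_{k+1}v_{k+1}$. Then for every integer $k\geq1$, \[ \sum_{i=1}^k\lambda_i\geq\theta\left(\frac{1-\sigma^2}{\inf_{z^\star\in A^{-1}(0)}\|x_0-z^\star\|^2}\right)^{\frac{p-1}{2}}k^{\frac{p+1}{2}}. \]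
   Context: The $\epsilon$-enlargement is $A^{\epsilon}(x)=\{v\in\mathbb{R}^d:\langle x-\tilde x,v-\tilde v\rangle\geq-\epsilon\ \forall\tilde x\in\mathbb{R}^d,\ \forall\tilde v\in A\tilde x\}$. *)

theory Defs
  imports "HOL-Analysis.Analysis"
begin

definition monotone_op :: "('a::real_inner \<Rightarrow> 'a set) \<Rightarrow> bool" where
  "monotone_op A \<longleftrightarrow>
     (\<forall>x y u v. u \<in> A x \<longrightarrow> v \<in> A y \<longrightarrow> inner (x - y) (u - v) \<ge> 0)"

definition maximal_monotone :: "('a::real_inner \<Rightarrow> 'a set) \<Rightarrow> bool" where
  "maximal_monotone A \<longleftrightarrow> monotone_op A \<and>
     (\<forall>B. monotone_op B \<and> (\<forall>x. A x \<subseteq> B x) \<longrightarrow> B = A)"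

definition enlargement :: "('a::real_inner \<Rightarrow> 'a set) \<Rightarrow> real \<Rightarrow> 'a \<Rightarrow> 'a set" where
  "enlargement A \<epsilon> x =
     {v. \<forall>x' v'. v' \<in> A x' \<longrightarrow> inner (x - x') (v - v') \<ge> - \<epsilon>}"

definition zeros_op :: "('a::real_vector \<Rightarrow> 'a set) \<Rightarrow> 'a set" where
  "zeros_op A = {z. 0 \<in> A z}"

end

theory Submission imports Defs begin

text \<open>Testing the enlargement inclusion against a zero z of A turns the relative error
  condition into the Fejer estimate |x_k - z|^2 + (1 - sigma^2) d_k^2 <= |x_(k-1) - z|^2, where
  d_k = |y_k - x_(k-1)|; telescoping gives (1 - sigma^2) (d_1^2 + ... + d_k^2) <= D, the squared
  distance from x0 to A^-1(0). The large-step condition reads lambda_i >= theta (d_i^2)^(-(p-1)/2),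
  and Jensen's inequality for the convex function t^(-(p-1)/2) bounds the sum of these powers
  from below by k^((p+1)/2) (d_1^2 + ... + d_k^2)^(-(p-1)/2).
  Only this inequality against the zeros of A is used.\<close>

lemma enlargement_inner_zero_ge:
  assumes "v \<in> enlargement A \<epsilon> y" and "z \<in> zeros_op A"
  shows "- \<epsilon> \<le> inner (y - z) v"
  using assms unfolding enlargement_def zeros_op_def by force

lemma hpe_step_fejer:
  fixes x y v z :: "'a::real_inner"
  assumes inner_ge: "- \<epsilon> \<le> inner (y - z) v" and lam: "0 \<le> lam"
    and err: "(norm (lam *\<^sub>R v + y - x))\<^sup>2 + 2 * lam * \<epsilon> \<le> \<sigma>\<^sup>2 * (norm (y - x))\<^sup>2"
  shows "(norm (x - lam *\<^sub>R v - z))\<^sup>2 + (1 - \<sigma>\<^sup>2) * (norm (y - x))\<^sup>2 \<le> (norm (x - z))\<^sup>2"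
proof -
  have expand: "(norm (x - w - z))\<^sup>2
      = (norm (x - z))\<^sup>2 + (norm (w + y - x))\<^sup>2 - (norm (y - x))\<^sup>2 - 2 * inner (y - z) w" for w
    unfolding power2_norm_eq_inner
    by (simp add: inner_diff_left inner_diff_right inner_add_left inner_add_right inner_commute)
  have "- (lam * \<epsilon>) \<le> inner (y - z) (lam *\<^sub>R v)"
    using mult_left_mono[OF inner_ge lam] by simp
  moreover have "(1 - \<sigma>\<^sup>2) * (norm (y - x))\<^sup>2 = (norm (y - x))\<^sup>2 - \<sigma>\<^sup>2 * (norm (y - x))\<^sup>2"
    by (simp add: left_diff_distrib)
  ultimately show ?thesis
    using expand[of "lam *\<^sub>R v"] err by linarith
qed

lemma sum_decreases_le:
  fixes f g :: "nat \<Rightarrow> 'b::ordered_ab_group_add"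
  assumes "\<And>n. f (Suc n) + g (Suc n) \<le> f n"
  shows "f n + (\<Sum>i=1..n. g i) \<le> f 0"
proof (induction n)
  case (Suc n)
  have "f (Suc n) + (\<Sum>i=1..Suc n. g i) = (f (Suc n) + g (Suc n)) + (\<Sum>i=1..n. g i)"
    by (simp add: ac_simps)
  also have "\<dots> \<le> f n + (\<Sum>i=1..n. g i)"
    using assms by (rule add_right_mono)
  finally show ?case
    using Suc.IH by order
qed simp

lemma powr_convex_nonpos:
  assumes "q \<le> 0"
  shows "convex_on {0<..} (\<lambda>t::real. t powr q)"
proof (rule f''_ge0_imp_convex)
  show "((\<lambda>t. t powr q) has_real_derivative q * t powr (q - 1)) (at t)"
    if "t \<in> {0<..}" for t :: real
    using has_real_derivative_powr[of t q] that by simp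
  show "((\<lambda>t. q * t powr (q - 1)) has_real_derivative q * ((q - 1) * t powr (q - 1 - 1))) (at t)"
    if "t \<in> {0<..}" for t :: real
    using has_real_derivative_powr[of t "q - 1"] that by (intro DERIV_cmult) simp
  show "0 \<le> q * ((q - 1) * t powr (q - 1 - 1))" for t :: real
    using assms by (intro mult_nonpos_nonpos mult_nonpos_nonneg) auto
qed simp

lemma card_powr_mul_sum_powr_nonpos_le:
  fixes a :: "'i \<Rightarrow> real"
  assumes I: "finite I" "I \<noteq> {}" and a: "\<And>i. i \<in> I \<Longrightarrow> 0 < a i" and q: "q \<le> 0"
  shows "card I powr (1 - q) * (\<Sum>i\<in>I. a i) powr q \<le> (\<Sum>i\<in>I. a i powr q)"
proof -
  define n where "n = real (card I)"
  have n: "0 < n"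
    using I by (simp add: n_def card_gt_0_iff)
  have "(\<Sum>i\<in>I. (1 / n) *\<^sub>R a i) powr q \<le> (\<Sum>i\<in>I. 1 / n * a i powr q)"
    using I powr_convex_nonpos[OF q] a n by (intro convex_on_sum) (auto simp: n_def)
  then have jensen: "((\<Sum>i\<in>I. a i) / n) powr q \<le> (\<Sum>i\<in>I. a i powr q) / n"
    by (simp add: sum_distrib_left[symmetric] sum_divide_distrib[symmetric])
  have "0 \<le> (\<Sum>i\<in>I. a i)"
    using a by (intro sum_nonneg) (simp add: less_imp_le)
  then have "n powr (1 - q) * (\<Sum>i\<in>I. a i) powr q = n * ((\<Sum>i\<in>I. a i) / n) powr q"
    using n by (simp add: powr_diff powr_divide)
  also have "\<dots> \<le> n * ((\<Sum>i\<in>I. a i powr q) / n)"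
    using mult_left_mono[OF jensen, of n] n by simp
  also have "\<dots> = (\<Sum>i\<in>I. a i powr q)"
    using n by simp
  finally show ?thesis
    by (simp add: n_def)
qed

lemma powr_neg_mul_card_powr_le_sum_powr:
  fixes a :: "'i \<Rightarrow> real"
  assumes I: "finite I" "I \<noteq> {}" and a: "\<And>i. i \<in> I \<Longrightarrow> 0 < a i" and q: "q \<le> 0"
    and c: "0 \<le> c" "c * (\<Sum>i\<in>I. a i) \<le> 1"
  shows "c powr (- q) * card I powr (1 - q) \<le> (\<Sum>i\<in>I. a i powr q)"
proof -
  define S where "S = (\<Sum>i\<in>I. a i)"
  have S: "0 < S"
    unfolding S_def using I a by (intro sum_pos) auto
  have "c powr (- q) \<le> (1 / S) powr (- q)"
    using c S q by (intro powr_mono2) (auto simp: S_def field_simps)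
  also have "\<dots> = S powr q"
    using S by (simp add: powr_divide powr_minus_divide)
  finally have "c powr (- q) * card I powr (1 - q) \<le> card I powr (1 - q) * S powr q"
    by (simp add: mult_right_mono mult.commute)
  also have "\<dots> \<le> (\<Sum>i\<in>I. a i powr q)"
    unfolding S_def using I a q by (rule card_powr_mul_sum_powr_nonpos_le)
  finally show ?thesis .
qed

lemma power2_powr_neg_half:
  fixes d :: real
  assumes "0 < d"
  shows "(d\<^sup>2) powr (- real m / 2) = inverse (d ^ m)"
proof -
  have "(d\<^sup>2) powr (- real m / 2) = (d powr 2) powr (- real m / 2)"
    using assms by (simp add: powr_numeral)
  also have "\<dots> = d powr (- real m)"
    by (simp add: powr_powr)
  also have "\<dots> = inverse (d ^ m)"
    using assms by (simp add: powr_minus powr_realpow)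
  finally show ?thesis .
qed

lemma sum_ge_of_large_steps:
  fixes lam d :: "'i \<Rightarrow> real"
  assumes I: "finite I" "I \<noteq> {}" and \<theta>: "0 < \<theta>" and p: "1 \<le> p"
    and large: "\<And>i. i \<in> I \<Longrightarrow> \<theta> \<le> lam i * d i ^ (p - 1)"
    and d: "\<And>i. i \<in> I \<Longrightarrow> 0 \<le> d i"
    and c: "0 \<le> c" "c * (\<Sum>i\<in>I. (d i)\<^sup>2) \<le> 1"
  shows "\<theta> * c powr ((real p - 1) / 2) * card I powr ((real p + 1) / 2) \<le> (\<Sum>i\<in>I. lam i)"
proof (cases "p = 1")
  case True
  have "c powr 0 \<le> 1"
    by simp
  then have "\<theta> * c powr ((real p - 1) / 2) * card I powr ((real p + 1) / 2) \<le> (\<Sum>i\<in>I. \<theta>)"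
    using True \<theta> by simp
  also have "\<dots> \<le> (\<Sum>i\<in>I. lam i)"
    using large True by (intro sum_mono) simp
  finally show ?thesis .
next
  case False
  define q where "q = - real (p - 1) / 2"
  have d_pos: "0 < d i" if "i \<in> I" for i
    using large[OF that] d[OF that] \<theta> False p
    by (cases "d i = 0") (auto simp: zero_power)
  have lam_ge: "\<theta> * (d i)\<^sup>2 powr q \<le> lam i" if "i \<in> I" for i
  proof -
    have "\<theta> * (d i)\<^sup>2 powr q = \<theta> / d i ^ (p - 1)"
      unfolding q_def power2_powr_neg_half[OF d_pos[OF that]] by (simp add: divide_inverse)
    also have "\<dots> \<le> lam i"
      using large[OF that] d_pos[OF that] by (simp add: pos_divide_le_eq)
    finally show ?thesis .
  qed
  have "c powr (- q) * card I powr (1 - q) \<le> (\<Sum>i\<in>I. (d i)\<^sup>2 powr q)"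
    using I d_pos c by (intro powr_neg_mul_card_powr_le_sum_powr) (simp_all add: q_def less_imp_neq[symmetric])
  then have "\<theta> * c powr (- q) * card I powr (1 - q) \<le> \<theta> * (\<Sum>i\<in>I. (d i)\<^sup>2 powr q)"
    using \<theta> by (simp add: mult.assoc)
  also have "\<dots> \<le> (\<Sum>i\<in>I. lam i)"
    unfolding sum_distrib_left using lam_ge by (rule sum_mono)
  finally show ?thesis
    using p by (simp add: q_def of_nat_diff add_divide_distrib diff_divide_distrib add.commute)
qed

theorem lemma4p3:
  fixes A :: "'a::euclidean_space \<Rightarrow> 'a set"
    and p :: nat and \<sigma> \<theta> :: real and x0 :: 'a
    and lam \<epsilon> :: "nat \<Rightarrow> real" and y v x :: "nat \<Rightarrow> 'a"
  assumes mm: "maximal_monotone A"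
    and zne: "zeros_op A \<noteq> {}"
    and p: "p \<ge> 1"
    and sigma: "0 < \<sigma>" "\<sigma> < 1"
    and theta: "\<theta> > 0"
    and x0: "x0 \<notin> zeros_op A"
    and x_0: "x 0 = x0"
    and lam_pos: "\<And>k. lam (Suc k) > 0"
    and eps_nonneg: "\<And>k. \<epsilon> (Suc k) \<ge> 0"
    and incl: "\<And>k. v (Suc k) \<in> enlargement A (\<epsilon> (Suc k)) (y (Suc k))"
    and err: "\<And>k. (norm (lam (Suc k) *\<^sub>R v (Suc k) + y (Suc k) - x k))\<^sup>2
                      + 2 * lam (Suc k) * \<epsilon> (Suc k)
                    \<le> \<sigma>\<^sup>2 * (norm (y (Suc k) - x k))\<^sup>2"
    and large: "\<And>k. lam (Suc k) * norm (y (Suc k) - x k) ^ (p - 1) \<ge> \<theta>"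
    and upd: "\<And>k. x (Suc k) = x k - lam (Suc k) *\<^sub>R v (Suc k)"
    and k: "k \<ge> 1"
  shows "(\<Sum>i=1..k. lam i) \<ge>
           \<theta> * ((1 - \<sigma>\<^sup>2) / (INF z\<in>zeros_op A. (norm (x0 - z))\<^sup>2))
                 powr ((real p - 1) / 2)
             * real k powr ((real p + 1) / 2)"
proof -
  define d where "d i = norm (y i - x (i - 1))" for i
  define D where "D = (INF z\<in>zeros_op A. (norm (x0 - z))\<^sup>2)"
  have fejer: "(1 - \<sigma>\<^sup>2) * (\<Sum>i=1..k. (d i)\<^sup>2) \<le> (norm (x0 - z))\<^sup>2" if z: "z \<in> zeros_op A" for z
  proof -
    have "(norm (x n - z))\<^sup>2 + (\<Sum>i=1..n. (1 - \<sigma>\<^sup>2) * (d i)\<^sup>2) \<le> (norm (x 0 - z))\<^sup>2" for n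
      using hpe_step_fejer[OF enlargement_inner_zero_ge[OF incl z] less_imp_le[OF lam_pos] err]
      by (intro sum_decreases_le) (simp add: upd d_def)
    from this[of k] show ?thesis
      unfolding x_0 sum_distrib_left using zero_le_power2[of "norm (x k - z)"] by linarith
  qed
  have "(1 - \<sigma>\<^sup>2) * (\<Sum>i=1..k. (d i)\<^sup>2) \<le> D" and "0 \<le> D"
    unfolding D_def using zne fejer by (auto intro: cINF_greatest)
  moreover have "0 < 1 - \<sigma>\<^sup>2"
    using sigma by (simp add: power_less_one_iff)
  ultimately have c: "0 \<le> (1 - \<sigma>\<^sup>2) / D" "(1 - \<sigma>\<^sup>2) / D * (\<Sum>i=1..k. (d i)\<^sup>2) \<le> 1"
    by (auto simp: divide_le_eq_1)
  have "\<theta> \<le> lam i * d i ^ (p - 1)" if "i \<in> {1..k}" for i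
    using large[of "i - 1"] that by (simp add: d_def)
  from sum_ge_of_large_steps[OF _ _ theta p this _ c] k show ?thesis
    by (simp add: D_def d_def)
qed

end
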